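(* Let $\varepsilon>0$ and $\delta\in(0,1)$, and let $\pi_{\mathrm{opt}}:\mathbb{N}\to[0,1]$ be defined by $\pi_{\mathrm{opt}}(0)=0$ and $\pi_{\mathrm{opt}}(n+1)=\min\left(e^{\varepsilon}\pi_{\mathrm{opt}}(n)+\delta,\;1-e^{-\varepsilon}(1-\pi_{\mathrm{opt}}(n)-\delta),\;1\right)$ for $n\ge0$. Let $n_1$ be the largest integer $n\ge1$ such that $\pi_{\mathrm{opt}}(n-1)\le \frac{1-\delta}{e^{\varepsilon}+1}$ (equivalently, the last index $n$ for which the first argument $e^{\varepsilon}\pi_{\mathrm{opt}}(n-1)+\delta$ of the minimum is the active one). Then \[ n_1=1+\left\lfloor\frac{1}{\varepsilon}\ln\left(\frac{e^{\varepsilon}+2\delta-1}{\delta(e^{\varepsilon}+1)}\right)\right\rfloor . \]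
   Context: $\mathbb{N}=\{0,1,2,\dots\}$. $\pi_{\mathrm{opt}}$ is the optimal partition selection primitive for $(\varepsilon,\delta)$-differential privacy: the pointwise largest $\pi:\mathbb{N}\to[0,1]$ with $\pi(0)=0$ such that releasing a partition with $n$ users with probability $\pi(n)$ is $(\varepsilon,\delta)$-DP with respect to adding or removing one user; it satisfies the recurrence stated. The value $\frac{1-\delta}{e^{\varepsilon}+1}$ is the point $x$ where $e^{\varepsilon}x+\delta=1-e^{-\varepsilon}(1-x-\delta)$. *)

theory Defs
  imports "HOL-Analysis.Analysis"
begin

fun pi_opt :: "real \<Rightarrow> real \<Rightarrow> nat \<Rightarrow> real" where
  "pi_opt \<epsilon> \<delta> 0 = 0"
| "pi_opt \<epsilon> \<delta> (Suc n) =
     min (exp \<epsilon> * pi_opt \<epsilon> \<delta> n + \<delta>)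
         (min (1 - exp (-\<epsilon>) * (1 - pi_opt \<epsilon> \<delta> n - \<delta>)) 1)"

definition n1 :: "real \<Rightarrow> real \<Rightarrow> nat" where
  "n1 \<epsilon> \<delta> = (GREATEST n. n \<ge> 1 \<and> pi_opt \<epsilon> \<delta> (n - 1) \<le> (1 - \<delta>) / (exp \<epsilon> + 1))"

end

theory Submission
  imports Defs
begin

text \<open>Write \<open>a = e\<^sup>\<epsilon>\<close> and \<open>x = (1 - \<delta>) / (a + 1)\<close>. Below \<open>x\<close> the first argument of the minimum
  is active, so \<open>\<pi>\<^sub>o\<^sub>p\<^sub>t\<close> follows the geometric recursion \<open>p \<mapsto> a p + \<delta>\<close>, i.e.
  \<open>\<pi>\<^sub>o\<^sub>p\<^sub>t(k) = \<delta> (a\<^sup>k - 1) / (a - 1)\<close>; once above \<open>x\<close> it never comes back. Hence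
  \<open>\<pi>\<^sub>o\<^sub>p\<^sub>t(k) \<le> x\<close> exactly when \<open>\<delta> (a\<^sup>k - 1) / (a - 1) \<le> x\<close>, which rearranges to
  \<open>a\<^sup>k \<le> (a + 2\<delta> - 1) / (\<delta> (a + 1))\<close>; taking logarithms gives the floor.\<close>

definition pi_step :: "real \<Rightarrow> real \<Rightarrow> real \<Rightarrow> real" where
  "pi_step a d p = min (a * p + d) (min (1 - (1 - p - d) / a) 1)"

lemma pi_opt_Suc_eq_pi_step [simp]:
  "pi_opt \<epsilon> \<delta> (Suc n) = pi_step (exp \<epsilon>) \<delta> (pi_opt \<epsilon> \<delta> n)"
  by (simp add: pi_step_def exp_minus field_simps)

declare pi_opt.simps(2) [simp del]

lemma pi_step_below_threshold:
  fixes a d p :: real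
  assumes "1 \<le> a" and "0 \<le> p" and "p \<le> (1 - d) / (a + 1)"
  shows "pi_step a d p = a * p + d"
proof -
  have below: "(a + 1) * p \<le> 1 - d"
    using assms by (simp add: pos_le_divide_eq mult.commute)
  then have "(a - 1) * ((a + 1) * p) \<le> (a - 1) * (1 - d)"
    using assms(1) by (intro mult_left_mono) auto
  then have "a * (a * p + d) \<le> a - (1 - p - d)"
    by (simp add: algebra_simps)
  then have "a * p + d \<le> 1 - (1 - p - d) / a"
    using assms(1) by (simp add: field_simps)
  moreover have "a * p + d \<le> 1"
    using below \<open>0 \<le> p\<close> by (simp add: algebra_simps)
  ultimately show ?thesis
    by (simp add: pi_step_def)
qed

text \<open>At the threshold \<open>x\<close> both affine branches of \<open>pi_step\<close> take the value \<open>1 - x > x\<close>;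
  as both are strictly increasing, they stay above \<open>x\<close> to the right of it.\<close>

lemma pi_step_above_threshold:
  fixes a d p :: real
  assumes "1 \<le> a" and "0 < d" and "p > (1 - d) / (a + 1)"
  shows "pi_step a d p > (1 - d) / (a + 1)"
proof -
  define x where "x = (1 - d) / (a + 1)"
  have x: "x * (a + 1) = 1 - d"
    using assms(1) by (simp add: x_def)
  have "x < 1 / 2"
    using assms(1,2) by (simp add: x_def field_simps)
  have "a * x + d = 1 - x" and "1 - x - d = a * x"
    using x by (simp_all add: algebra_simps)
  then have "1 - (1 - x - d) / a = 1 - x"
    using assms(1) by simp
  have "x < p"
    using assms(3) by (simp add: x_def)
  then have "a * x < a * p" and "(1 - p - d) / a < (1 - x - d) / a"
    using assms(1) by (simp_all add: divide_strict_right_mono)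
  then show ?thesis
    using \<open>a * x + d = 1 - x\<close> \<open>1 - (1 - x - d) / a = 1 - x\<close> \<open>x < 1 / 2\<close>
    by (simp add: pi_step_def x_def[symmetric])
qed

lemma pi_opt_above_threshold_mono:
  assumes "0 \<le> \<epsilon>" and "0 < \<delta>" and "m \<le> k"
    and "pi_opt \<epsilon> \<delta> m > (1 - \<delta>) / (exp \<epsilon> + 1)"
  shows "pi_opt \<epsilon> \<delta> k > (1 - \<delta>) / (exp \<epsilon> + 1)"
  using assms(3,4)
proof (induction k rule: dec_induct)
  case (step k)
  then show ?case
    using assms(1,2) by (simp add: pi_step_above_threshold)
qed

lemma pi_opt_geometric:
  assumes "0 < \<epsilon>" and "0 \<le> \<delta>"
    and "\<forall>j<k. pi_opt \<epsilon> \<delta> j \<le> (1 - \<delta>) / (exp \<epsilon> + 1)"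
  shows "pi_opt \<epsilon> \<delta> k = \<delta> * (exp \<epsilon> ^ k - 1) / (exp \<epsilon> - 1)"
  using assms(3)
proof (induction k)
  case 0
  then show ?case
    by simp
next
  case (Suc k)
  have "exp \<epsilon> > 1"
    using assms(1) by simp
  have pk: "pi_opt \<epsilon> \<delta> k = \<delta> * (exp \<epsilon> ^ k - 1) / (exp \<epsilon> - 1)"
    using Suc by simp
  have "0 \<le> pi_opt \<epsilon> \<delta> k"
    using pk \<open>exp \<epsilon> > 1\<close> assms(2) by (simp add: one_le_power)
  moreover have "pi_opt \<epsilon> \<delta> k \<le> (1 - \<delta>) / (exp \<epsilon> + 1)"
    using Suc.prems by simp
  ultimately have "pi_opt \<epsilon> \<delta> (Suc k) = exp \<epsilon> * pi_opt \<epsilon> \<delta> k + \<delta>"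
    using \<open>exp \<epsilon> > 1\<close> by (simp add: pi_step_below_threshold)
  also have "\<dots> = \<delta> * (exp \<epsilon> ^ Suc k - 1) / (exp \<epsilon> - 1)"
    using pk \<open>exp \<epsilon> > 1\<close> by (simp add: field_simps)
  finally show ?case .
qed

lemma geometric_le_threshold_iff:
  fixes a d :: real
  assumes "1 < a" and "0 < d"
  shows "d * (a ^ k - 1) / (a - 1) \<le> (1 - d) / (a + 1) \<longleftrightarrow>
    a ^ k \<le> (a + 2 * d - 1) / (d * (a + 1))"
proof -
  have "d * (a ^ k - 1) / (a - 1) \<le> (1 - d) / (a + 1) \<longleftrightarrow>
      d * (a ^ k - 1) * (a + 1) \<le> (1 - d) * (a - 1)"
    using assms by (simp add: divide_simps)
  also have "\<dots> \<longleftrightarrow> a ^ k * (d * (a + 1)) \<le> a + 2 * d - 1"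
    by (simp add: algebra_simps)
  also have "\<dots> \<longleftrightarrow> a ^ k \<le> (a + 2 * d - 1) / (d * (a + 1))"
    using assms by (simp add: pos_le_divide_eq)
  finally show ?thesis .
qed

lemma pi_opt_le_threshold_iff:
  assumes "0 < \<epsilon>" and "0 < \<delta>"
  shows "pi_opt \<epsilon> \<delta> k \<le> (1 - \<delta>) / (exp \<epsilon> + 1) \<longleftrightarrow>
    exp \<epsilon> ^ k \<le> (exp \<epsilon> + 2 * \<delta> - 1) / (\<delta> * (exp \<epsilon> + 1))"
    (is "?below k \<longleftrightarrow> ?small k")
proof -
  have below_iff_small: "?below k \<longleftrightarrow> ?small k" if "\<forall>j<k. ?below j" for k
    using pi_opt_geometric[OF assms(1) _ that] geometric_le_threshold_iff[of "exp \<epsilon>" \<delta> k] assms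
    by simp
  have small_antimono: "?small j" if "?small k" and "j \<le> k" for j k
  proof -
    have "exp \<epsilon> ^ j \<le> exp \<epsilon> ^ k"
      using that(2) assms(1) by (simp add: power_increasing)
    then show ?thesis
      using that(1) by linarith
  qed
  show ?thesis
  proof
    assume "?below k"
    then have "\<forall>j<k. ?below j"
      using pi_opt_above_threshold_mono[of \<epsilon> \<delta>] assms by (meson less_imp_le not_le)
    then show "?small k"
      using below_iff_small \<open>?below k\<close> by blast
  next
    assume "?small k"
    then show "?below k"
    proof (induction k rule: less_induct)
      case (less k)
      then have "\<forall>j<k. ?below j"
        using small_antimono by (meson less_imp_le)
      then show ?case
        using below_iff_small less.prems by blast
    qed
  qed
qed

lemma exp_power_le_iff_le_floor:
  fixes \<epsilon> R :: real
  assumes "0 < \<epsilon>" and "0 < R"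
  shows "exp \<epsilon> ^ k \<le> R \<longleftrightarrow> int k \<le> \<lfloor>(1 / \<epsilon>) * ln R\<rfloor>"
proof -
  have "exp \<epsilon> ^ k \<le> R \<longleftrightarrow> real k * \<epsilon> \<le> ln R"
    using assms(2) by (simp add: exp_of_nat_mult[symmetric] ln_ge_iff)
  also have "\<dots> \<longleftrightarrow> real k \<le> (1 / \<epsilon>) * ln R"
    using assms(1) by (simp add: field_simps)
  finally show ?thesis
    by (simp add: le_floor_iff)
qed

lemma threshold_ratio_ge_one:
  fixes a d :: real
  assumes "1 \<le> a" and "0 < d" and "d \<le> 1"
  shows "(a + 2 * d - 1) / (d * (a + 1)) \<ge> 1"
proof -
  have "(a - 1) * (1 - d) \<ge> 0"
    using assms by simp
  then have "d * (a + 1) \<le> a + 2 * d - 1"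
    by (simp add: algebra_simps)
  moreover have "d * (a + 1) > 0"
    using assms by simp
  ultimately show ?thesis
    by simp
qed

theorem lemma4:
  fixes \<epsilon> \<delta> :: real
  assumes "\<epsilon> > 0" and "0 < \<delta>" and "\<delta> < 1"
  shows "int (n1 \<epsilon> \<delta>) =
    1 + \<lfloor>(1 / \<epsilon>) * ln ((exp \<epsilon> + 2 * \<delta> - 1) / (\<delta> * (exp \<epsilon> + 1)))\<rfloor>"
proof -
  define R where "R = (exp \<epsilon> + 2 * \<delta> - 1) / (\<delta> * (exp \<epsilon> + 1))"
  define F where "F = \<lfloor>(1 / \<epsilon>) * ln R\<rfloor>"
  have "R \<ge> 1"
    unfolding R_def using assms by (intro threshold_ratio_ge_one) auto
  then have "F \<ge> 0"
    using assms(1) by (simp add: F_def)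
  have below_iff: "pi_opt \<epsilon> \<delta> k \<le> (1 - \<delta>) / (exp \<epsilon> + 1) \<longleftrightarrow> int k \<le> F" for k
    using pi_opt_le_threshold_iff[OF assms(1,2)] exp_power_le_iff_le_floor[OF assms(1)] \<open>R \<ge> 1\<close>
    by (simp add: R_def F_def)
  have "n1 \<epsilon> \<delta> = nat F + 1"
    unfolding n1_def
  proof (rule Greatest_equality)
    show "1 \<le> nat F + 1 \<and> pi_opt \<epsilon> \<delta> (nat F + 1 - 1) \<le> (1 - \<delta>) / (exp \<epsilon> + 1)"
      using below_iff \<open>F \<ge> 0\<close> by simp
  next
    fix n assume "1 \<le> n \<and> pi_opt \<epsilon> \<delta> (n - 1) \<le> (1 - \<delta>) / (exp \<epsilon> + 1)"
    then show "n \<le> nat F + 1"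
      using below_iff[of "n - 1"] by linarith
  qed
  then show ?thesis
    using \<open>F \<ge> 0\<close> by (simp add: F_def R_def)
qed

end
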